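(* Let $d \ge 1$ be any dimension, let $S_n = \{s_1, \ldots, s_n\} \subseteq \mathbb{R}^d$ be any set of $n$ distinct locations, and fix $\nu > 0$. For $\rho > 0$ let $\Gamma_n(\rho)$ be the $n \times n$ matrix with entries $K(s_i - s_j; \rho, \nu)$, where $K$ is the Matérn correlation function defined in the context, and for $Z_n \in \mathbb{R}^n$ define $$\hat{c}_n(\rho) = \frac{Z_n^{\mathrm{T}} \Gamma_n(\rho)^{-1} Z_n}{n \rho^{2\nu}}.$$ Then for any $0 < \rho_1 < \rho_2$ and any vector $Z_n \in \mathbb{R}^n$, we have $\hat{c}_n(\rho_2) \le \hat{c}_n(\rho_1)$.
   Context: The Matérn correlation function with range parameter $\rho > 0$ and smoothness parameter $\nu > 0$ is defined for $h \in \mathbb{R}^d$ by $$K(h; \rho, \nu) = \frac{(\|h\|/\rho)^\nu}{\Gamma(\nu) 2^{\nu - 1}} \mathcal{K}_\nu(\|h\|/\rho),$$ where $\mathcal{K}_\nu$ is the modified Bessel function of the second kind of order $\nu$. By continuity, $K(0; \rho, \nu) = 1$. *)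

theory Defs
  imports "HOL-Analysis.Analysis"
begin

definition besselK :: "real \<Rightarrow> real \<Rightarrow> real" where
  "besselK nu x = integral {0..} (\<lambda>t. exp (- x * cosh t) * cosh (nu * t))"

text \<open>Matern correlation function K(h; rho, nu), with K(0) = 1 by continuity.\<close>
definition matern :: "'a::real_normed_vector \<Rightarrow> real \<Rightarrow> real \<Rightarrow> real" where
  "matern h rho nu =
     (if h = 0 then 1
      else (norm h / rho) powr nu / (Gamma nu * 2 powr (nu - 1)) * besselK nu (norm h / rho))"

definition matern_corr_matrix :: "('n::finite \<Rightarrow> 'a::real_normed_vector) \<Rightarrow> real \<Rightarrow> real \<Rightarrow> real^'n^'n" where
  "matern_corr_matrix s rho nu = (\<chi> i j. matern (s i - s j) rho nu)"

definition c_hat :: "('n::finite \<Rightarrow> 'a::real_normed_vector) \<Rightarrow> real \<Rightarrow> real^'n \<Rightarrow> real \<Rightarrow> real" where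
  "c_hat s nu Z rho =
     (Z \<bullet> (matrix_inv (matern_corr_matrix s rho nu) *v Z)) / (real CARD('n) * rho powr (2 * nu))"

end

theory Submission
  imports Defs
begin

text \<open>
  For \<open>nu > 0\<close> the Matern function is a scale mixture of Gaussian kernels,
  \<open>rho^(2 nu) Gamma(nu) K(h; rho, nu) = \<integral>\<^sub>0\<^sup>\<infinity> t^(nu - 1) exp (- t / rho\<^sup>2) exp (- |h|\<^sup>2 / (4 t)) dt\<close>,
  which follows from the integral representation of the Bessel function by the substitution
  \<open>t = (|h| rho / 2) e^u\<close>. Gaussian kernels are strictly positive definite on distinct points,
  hence so is \<open>rho^(2 nu) Gamma_n(rho)\<close>; and since the mixing weight \<open>exp (- t / rho\<^sup>2)\<close>
  increases with \<open>rho\<close>, this matrix increases in the Loewner order. Inversion reverses the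
  Loewner order of positive definite matrices, so \<open>Z\<^sup>T (rho^(2 nu) Gamma_n(rho))\<^sup>-\<^sup>1 Z = n c_n(rho)\<close>
  decreases in \<open>rho\<close>.
\<close>

section \<open>Quadratic forms and inverses\<close>

lemma matrix_inv_right_of_pos_def:
  fixes M :: "real^'n::finite^'n"
  assumes "\<And>x. x \<noteq> 0 \<Longrightarrow> 0 < x \<bullet> (M *v x)"
  shows "M *v (matrix_inv M *v z) = z"
proof -
  have "\<forall>x. M *v x = 0 \<longrightarrow> x = 0"
    using assms by force
  then have "invertible M"
    using invertible_left_inverse matrix_left_invertible_ker by blast
  then have "M ** matrix_inv M = mat 1"
    unfolding invertible_def matrix_inv_def by (rule someI2_ex) blast
  then show ?thesis by (simp add: matrix_vector_mul_assoc)
qed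

lemma inner_solution_antimono:
  fixes A B :: "real^'n::finite^'n" and z u v :: "real^'n"
  assumes "transpose A = A" and "\<And>x. 0 \<le> x \<bullet> (A *v x)"
    and "\<And>x. x \<bullet> (A *v x) \<le> x \<bullet> (B *v x)"
    and "A *v u = z" and "B *v v = z"
  shows "z \<bullet> v \<le> z \<bullet> u"
proof -
  have "u \<bullet> (A *v v) = z \<bullet> v"
    using assms(1,4) dot_lmul_matrix[of u A v] by (metis transpose_matrix_vector)
  then have "(u - v) \<bullet> (A *v (u - v)) = z \<bullet> u - 2 * (z \<bullet> v) + v \<bullet> (A *v v)"
    using assms(4) by (simp add: matrix_vector_mult_diff_distrib inner_diff inner_commute)
  also have "\<dots> \<le> z \<bullet> u - 2 * (z \<bullet> v) + z \<bullet> v"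
    using assms(3)[of v] assms(5) by (simp add: inner_commute)
  finally show ?thesis using assms(2)[of "u - v"] by simp
qed

section \<open>Strict positive definiteness of the Gaussian kernel\<close>

lemma power_sums_eq_zero_imp_eq_zero:
  fixes b l :: "'n::finite \<Rightarrow> real"
  assumes "inj l" and "\<And>k. (\<Sum>i\<in>UNIV. b i * l i ^ k) = 0"
  shows "b i0 = 0"
proof -
  \<comment> \<open>Pair the coefficients with the polynomial vanishing at every node except l i0.\<close>
  define q where "q = (\<Prod>j\<in>UNIV-{i0}. [:- l j, 1:])"
  have poly_q: "poly q x = (\<Prod>j\<in>UNIV-{i0}. x - l j)" for x
    by (simp add: q_def poly_prod)
  have "(\<Sum>i\<in>UNIV. b i * poly q (l i)) = (\<Sum>k\<le>degree q. coeff q k * (\<Sum>i\<in>UNIV. b i * l i ^ k))"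
    by (simp add: poly_altdef sum_distrib_left mult_ac sum.swap[of _ UNIV])
  also have "\<dots> = 0" using assms(2) by simp
  finally have "(\<Sum>i\<in>UNIV. b i * poly q (l i)) = 0" .
  moreover have "poly q (l i) = 0" if "i \<noteq> i0" for i
    unfolding poly_q using that by (intro prod_zero) auto
  then have "(\<Sum>i\<in>UNIV. b i * poly q (l i)) = b i0 * poly q (l i0)"
    by (subst sum.remove[of UNIV i0]) auto
  moreover have "poly q (l i0) \<noteq> 0"
    unfolding poly_q using assms(1) by (auto simp: inj_eq)
  ultimately show ?thesis by simp
qed

lemma exists_inner_inj:
  fixes x :: "'n::finite \<Rightarrow> 'a::euclidean_space"
  assumes "inj x"
  shows "\<exists>y. inj (\<lambda>i. x i \<bullet> y)"
proof (rule ccontr)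
  assume no_sep: "\<nexists>y. inj (\<lambda>i. x i \<bullet> y)"
  \<comment> \<open>Otherwise the whole space is covered by finitely many hyperplanes.\<close>
  define H where "H = (\<lambda>(i, j). {y. (x i - x j) \<bullet> y = 0}) ` {(i, j). i \<noteq> j}"
  have "negligible (\<Union>H)"
  proof (rule negligible_Union)
    show "finite H" unfolding H_def by simp
  next
    fix T assume "T \<in> H"
    then obtain i j where "i \<noteq> j" "T = {y. (x i - x j) \<bullet> y = 0}" unfolding H_def by auto
    moreover from \<open>i \<noteq> j\<close> have "x i - x j \<noteq> 0" using assms by (auto simp: inj_eq)
    ultimately show "negligible T" using negligible_hyperplane by blast
  qed
  moreover have "UNIV \<subseteq> \<Union>H"
  proof
    fix y
    from no_sep obtain i j where "i \<noteq> j" "x i \<bullet> y = x j \<bullet> y" unfolding inj_def by blast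
    then show "y \<in> \<Union>H" unfolding H_def by (auto simp: inner_diff_left)
  qed
  ultimately show False using negligible_subset non_negligible_UNIV by blast
qed

lemma inner_power_eq_sum_PiE:
  fixes x y :: "real^'d"
  shows "(x \<bullet> y) ^ k = (\<Sum>g\<in>PiE {..<k} (\<lambda>_. UNIV). \<Prod>m<k. x$(g m) * y$(g m))"
proof -
  have "(x \<bullet> y) ^ k = (\<Prod>m<k. \<Sum>d\<in>UNIV. x$d * y$d)"
    by (simp add: inner_vec_def)
  also have "\<dots> = (\<Sum>g\<in>PiE {..<k} (\<lambda>_. UNIV). \<Prod>m<k. x$(g m) * y$(g m))"
    by (rule prod_sum_PiE) auto
  finally show ?thesis .
qed

text \<open>\<open>(x i \<bullet> x j) ^ k\<close> is the Gram matrix of the \<open>k\<close>-th tensor powers of the \<open>x i\<close>.\<close>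

lemma sum_sum_inner_power_eq_sum_squares:
  fixes x :: "'n::finite \<Rightarrow> real^'d" and b :: "'n \<Rightarrow> real"
  shows "(\<Sum>i\<in>UNIV. \<Sum>j\<in>UNIV. b i * b j * (x i \<bullet> x j) ^ k) =
    (\<Sum>g\<in>PiE {..<k} (\<lambda>_. UNIV). (\<Sum>i\<in>UNIV. b i * (\<Prod>m<k. x i $ g m))\<^sup>2)"
proof -
  have "(\<Sum>i\<in>UNIV. \<Sum>j\<in>UNIV. b i * b j * (x i \<bullet> x j) ^ k) =
     (\<Sum>i\<in>UNIV. \<Sum>j\<in>UNIV. \<Sum>g\<in>PiE {..<k} (\<lambda>_. UNIV).
        (b i * (\<Prod>m<k. x i $ g m)) * (b j * (\<Prod>m<k. x j $ g m)))"
    by (simp add: inner_power_eq_sum_PiE sum_distrib_left prod.distrib mult_ac)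
  also have "\<dots> = (\<Sum>g\<in>PiE {..<k} (\<lambda>_. UNIV). \<Sum>i\<in>UNIV. \<Sum>j\<in>UNIV.
        (b i * (\<Prod>m<k. x i $ g m)) * (b j * (\<Prod>m<k. x j $ g m)))"
    by (simp add: sum.swap[where B="PiE _ _"])
  also have "\<dots> = (\<Sum>g\<in>PiE {..<k} (\<lambda>_. UNIV). (\<Sum>i\<in>UNIV. b i * (\<Prod>m<k. x i $ g m))\<^sup>2)"
    by (simp add: power2_eq_square sum_product)
  finally show ?thesis .
qed

lemma sum_sum_inner_power_nonneg:
  fixes x :: "'n::finite \<Rightarrow> real^'d" and b :: "'n \<Rightarrow> real"
  shows "0 \<le> (\<Sum>i\<in>UNIV. \<Sum>j\<in>UNIV. b i * b j * (x i \<bullet> x j) ^ k)"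
  unfolding sum_sum_inner_power_eq_sum_squares by (intro sum_nonneg) auto

lemma exists_sum_sum_inner_power_pos:
  fixes x :: "'n::finite \<Rightarrow> real^'d" and b :: "'n \<Rightarrow> real"
  assumes "inj x" and "b i0 \<noteq> 0"
  shows "\<exists>k. 0 < (\<Sum>i\<in>UNIV. \<Sum>j\<in>UNIV. b i * b j * (x i \<bullet> x j) ^ k)"
proof (rule ccontr)
  assume "\<nexists>k. 0 < (\<Sum>i\<in>UNIV. \<Sum>j\<in>UNIV. b i * b j * (x i \<bullet> x j) ^ k)"
  then have "(\<Sum>i\<in>UNIV. \<Sum>j\<in>UNIV. b i * b j * (x i \<bullet> x j) ^ k) = 0" for k
    using sum_sum_inner_power_nonneg[of b x k] by (meson antisym not_less)
  then have moments_zero: "(\<Sum>i\<in>UNIV. b i * (\<Prod>m<k. x i $ g m)) = 0"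
    if "g \<in> PiE {..<k} (\<lambda>_. UNIV)" for k :: nat and g
    using that by (subst (asm) sum_sum_inner_power_eq_sum_squares, subst (asm) sum_nonneg_eq_0_iff)
      (auto simp: finite_PiE)
  obtain y where y: "inj (\<lambda>i. x i \<bullet> y)" using exists_inner_inj[OF assms(1)] by blast
  have "(\<Sum>i\<in>UNIV. b i * (x i \<bullet> y) ^ k) =
      (\<Sum>g\<in>PiE {..<k} (\<lambda>_. UNIV).
        (\<Prod>m<k. y $ g m) * (\<Sum>i\<in>UNIV. b i * (\<Prod>m<k. x i $ g m)))" for k
    unfolding inner_power_eq_sum_PiE sum_distrib_left prod.distrib
    by (subst sum.swap) (simp add: mult_ac)
  then have "(\<Sum>i\<in>UNIV. b i * (x i \<bullet> y) ^ k) = 0" for k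
    by (simp add: moments_zero)
  then have "b i0 = 0" by (rule power_sums_eq_zero_imp_eq_zero[OF y])
  with assms(2) show False by contradiction
qed

lemma gaussian_kernel_pos_def:
  fixes x :: "'n::finite \<Rightarrow> real^'d" and a :: "real^'n" and c :: real
  assumes "c > 0" and "inj x" and "a \<noteq> 0"
  shows "0 < (\<Sum>i\<in>UNIV. \<Sum>j\<in>UNIV. a$i * a$j * exp (- (norm (x i - x j))\<^sup>2 / c))"
proof -
  \<comment> \<open>Factor out exp (-|x_i|^2/c) and expand exp (2 x_i.x_j/c) into its power series.\<close>
  define b where "b i = a$i * exp (- (norm (x i))\<^sup>2 / c)" for i
  define T where "T k = (\<Sum>i\<in>UNIV. \<Sum>j\<in>UNIV. b i * b j * (x i \<bullet> x j) ^ k)" for k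
  have factor: "a$i * a$j * exp (- (norm (x i - x j))\<^sup>2 / c) = b i * b j * exp (2 / c * (x i \<bullet> x j))"
    for i j
  proof -
    have "- (norm (x i - x j))\<^sup>2 / c
        = - (norm (x i))\<^sup>2 / c + - (norm (x j))\<^sup>2 / c + 2 / c * (x i \<bullet> x j)"
      using \<open>c > 0\<close> by (simp add: power2_norm_eq_inner inner_diff inner_commute field_simps)
    then show ?thesis by (simp add: b_def exp_add[symmetric] mult_ac)
  qed
  have series: "(\<lambda>k. (2 / c) ^ k / fact k * T k) sums
      (\<Sum>i\<in>UNIV. \<Sum>j\<in>UNIV. a$i * a$j * exp (- (norm (x i - x j))\<^sup>2 / c))"
  proof -
    have "(\<lambda>k. \<Sum>i\<in>UNIV. \<Sum>j\<in>UNIV. b i * b j * ((2 / c * (x i \<bullet> x j)) ^ k /\<^sub>R fact k))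
       sums (\<Sum>i\<in>UNIV. \<Sum>j\<in>UNIV. b i * b j * exp (2 / c * (x i \<bullet> x j)))"
      by (intro sums_sum sums_mult exp_converges)
    moreover have "(\<Sum>i\<in>UNIV. \<Sum>j\<in>UNIV. b i * b j * ((2 / c * (x i \<bullet> x j)) ^ k /\<^sub>R fact k))
        = (2 / c) ^ k / fact k * T k" for k
      by (simp add: T_def sum_distrib_left power_mult_distrib divide_inverse mult_ac)
    ultimately show ?thesis unfolding factor by simp
  qed
  from \<open>a \<noteq> 0\<close> obtain i0 where "a$i0 \<noteq> 0" by (auto simp: vec_eq_iff)
  then have "b i0 \<noteq> 0" by (simp add: b_def)
  then obtain k where "0 < T k"
    unfolding T_def using exists_sum_sum_inner_power_pos[OF assms(2)] by blast
  have "0 < suminf (\<lambda>k. (2 / c) ^ k / fact k * T k)"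
  proof (subst suminf_pos_iff)
    show "summable (\<lambda>k. (2 / c) ^ k / fact k * T k)" using series by (rule sums_summable)
    show "0 \<le> (2 / c) ^ n / fact n * T n" for n
      using sum_sum_inner_power_nonneg[of b x n] \<open>c > 0\<close> by (simp add: T_def)
    show "\<exists>n. 0 < (2 / c) ^ n / fact n * T n"
      using \<open>0 < T k\<close> \<open>c > 0\<close> by (intro exI[of _ k]) simp
  qed
  then show ?thesis using sums_unique[OF series] by simp
qed

lemma gaussian_kernel_nonneg:
  fixes x :: "'n::finite \<Rightarrow> real^'d" and a :: "real^'n" and c :: real
  assumes "c > 0" and "inj x"
  shows "0 \<le> (\<Sum>i\<in>UNIV. \<Sum>j\<in>UNIV. a$i * a$j * exp (- (norm (x i - x j))\<^sup>2 / c))"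
  using gaussian_kernel_pos_def[OF assms, of a] by (cases "a = 0") auto

section \<open>The Matern function as a Gaussian scale mixture\<close>

lemma Gamma_integral_real_greaterThan:
  assumes "nu > (0::real)"
  shows "((\<lambda>t. t powr (nu - 1) * exp (- t)) has_integral Gamma nu) {0<..}"
proof -
  have "((\<lambda>t. if t \<in> {0<..} then t powr (nu - 1) / exp t else 0) has_integral Gamma nu) {0..}"
    by (rule has_integral_spike[of "{0}", rotated 2, OF Gamma_integral_real[OF assms]]) auto
  then have "((\<lambda>t. t powr (nu - 1) / exp t) has_integral Gamma nu) {0<..}"
    by (subst (asm) has_integral_restrict) auto
  then show ?thesis by (simp add: exp_minus divide_inverse)
qed

lemma Gamma_integral_rate:
  fixes nu b :: real
  assumes "nu > 0" and "b > 0"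
  shows "((\<lambda>t. t powr (nu - 1) * exp (- b * t)) has_integral Gamma nu / b powr nu) {0<..}"
proof -
  define f where "f t = t powr (nu - 1) * exp (- b * t)" for t
  have Gamma:
    "((\<lambda>s. b powr (- nu) * (s powr (nu - 1) * exp (- s))) has_integral Gamma nu / b powr nu) {0<..}"
    using has_integral_mult_right[OF Gamma_integral_real_greaterThan[OF assms(1)], of "b powr (- nu)"]
    by (simp add: powr_minus divide_inverse mult_ac)
  have stretch: "\<bar>1 / b\<bar> * f (s / b) = b powr (- nu) * (s powr (nu - 1) * exp (- s))" if "s > 0" for s
    using that assms by (simp add: f_def powr_divide powr_diff powr_minus field_simps)
  have "(\<lambda>s. \<bar>1 / b\<bar> * f (s / b)) absolutely_integrable_on {0<..}
      \<and> integral {0<..} (\<lambda>s. \<bar>1 / b\<bar> * f (s / b)) = Gamma nu / b powr nu"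
  proof
    have "(\<lambda>s. b powr (- nu) * (s powr (nu - 1) * exp (- s))) absolutely_integrable_on {0<..}"
      using Gamma by (intro nonnegative_absolutely_integrable_1 has_integral_integrable) auto
    then show "(\<lambda>s. \<bar>1 / b\<bar> * f (s / b)) absolutely_integrable_on {0<..}"
      by (rule absolutely_integrable_spike[OF _ negligible_empty]) (use stretch in auto)
    have "integral {0<..} (\<lambda>s. \<bar>1 / b\<bar> * f (s / b))
        = integral {0<..} (\<lambda>s. b powr (- nu) * (s powr (nu - 1) * exp (- s)))"
      by (rule integral_cong) (use stretch in auto)
    then show "integral {0<..} (\<lambda>s. \<bar>1 / b\<bar> * f (s / b)) = Gamma nu / b powr nu"
      using integral_unique[OF Gamma] by simp
  qed
  then have "f absolutely_integrable_on (\<lambda>s. s / b) ` {0<..}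
      \<and> integral ((\<lambda>s. s / b) ` {0<..}) f = Gamma nu / b powr nu"
    by (rule has_absolute_integral_change_of_variables_1'
        [where g = "\<lambda>s. s / b" and g' = "\<lambda>_. 1 / b", THEN iffD1, rotated 3])
      (use assms in \<open>auto intro!: derivative_eq_intros simp: inj_on_def\<close>)
  moreover have "(\<lambda>s. s / b) ` {0<..} = {0<..}"
    using image_linear_greaterThan[of "1 / b" 0 0] assms by simp
  ultimately show ?thesis
    unfolding f_def[abs_def] by (auto simp: absolutely_integrable_on_def has_integral_iff)
qed

lemma integral_exp_cosh_eq_besselK:
  fixes nu x :: real
  assumes "(\<lambda>u. exp (nu * u) * exp (- x * cosh u)) absolutely_integrable_on UNIV"
  shows "integral UNIV (\<lambda>u. exp (nu * u) * exp (- x * cosh u)) = 2 * besselK nu x"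
proof -
  define f where "f u = exp (nu * u) * exp (- x * cosh u)" for u
  have f: "f absolutely_integrable_on UNIV"
    using assms by (simp add: f_def[abs_def])
  have neg: "f absolutely_integrable_on {..0}" and pos: "f absolutely_integrable_on {0..}"
    by (rule set_integrable_subset[OF f]; simp)+
  have reflect: "(\<lambda>u. f (- u)) integrable_on {0..} \<and> integral {0..} (\<lambda>u. f (- u)) = integral {..0} f"
  proof -
    have "(\<lambda>u. \<bar>-1\<bar> * f (- u)) absolutely_integrable_on {0..}
        \<and> integral {0..} (\<lambda>u. \<bar>-1\<bar> * f (- u)) = integral (uminus ` {0..}) f"
      by (rule has_absolute_integral_change_of_variables_1'[where g' = "\<lambda>_. -1", THEN iffD2])
        (use neg in \<open>auto intro!: derivative_eq_intros\<close>)
    then show ?thesis by (simp add: absolutely_integrable_on_def)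
  qed
  have "integral UNIV f = integral ({..0} \<union> {0..}) f"
    by (rule arg_cong[where f = "\<lambda>S. integral S f"]) auto
  also have "\<dots> = integral {..0} f + integral {0..} f"
  proof (rule integral_Un)
    show "negligible ({..0} \<inter> {0::real..})"
      by (rule negligible_subset[of "{0}"]) auto
  qed (use neg pos in \<open>auto simp: absolutely_integrable_on_def\<close>)
  also have "integral {..0} f = integral {0..} (\<lambda>u. f (- u))"
    using reflect by simp
  also have "\<dots> + integral {0..} f = integral {0..} (\<lambda>u. f (- u) + f u)"
    using reflect pos by (intro integral_add[symmetric]) (auto simp: absolutely_integrable_on_def)
  also have "\<dots> = integral {0..} (\<lambda>u. 2 * (exp (- x * cosh u) * cosh (nu * u)))"
    by (rule integral_cong) (simp add: f_def cosh_def field_simps)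
  also have "\<dots> = 2 * besselK nu x"
    by (simp only: integral_mult_right besselK_def)
  finally show ?thesis by (simp only: f_def)
qed

lemma gaussian_mixture_absolutely_integrable:
  fixes nu rho r :: real
  assumes "nu > 0" and "rho > 0"
  shows "(\<lambda>t. t powr (nu - 1) * exp (- t / rho\<^sup>2) * exp (- r\<^sup>2 / (4 * t))) absolutely_integrable_on {0<..}"
proof (rule measurable_bounded_by_integrable_imp_absolutely_integrable)
  show "(\<lambda>t. t powr (nu - 1) * exp (- t / rho\<^sup>2)) integrable_on {0<..}"
    using has_integral_integrable[OF Gamma_integral_rate[of nu "1 / rho\<^sup>2"]] assms by simp
  have "continuous_on {0<..} (\<lambda>t. t powr (nu - 1) * exp (- t / rho\<^sup>2) * exp (- r\<^sup>2 / (4 * t)))"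
    using assms by (auto intro!: continuous_intros)
  then show "(\<lambda>t. t powr (nu - 1) * exp (- t / rho\<^sup>2) * exp (- r\<^sup>2 / (4 * t)))
      \<in> borel_measurable (lebesgue_on {0<..})"
    by (rule continuous_imp_measurable_on_sets_lebesgue) simp
  show "norm (t powr (nu - 1) * exp (- t / rho\<^sup>2) * exp (- r\<^sup>2 / (4 * t)))
      \<le> t powr (nu - 1) * exp (- t / rho\<^sup>2)"
    if "t \<in> {0<..}" for t
    using that by (simp add: abs_mult mult_left_le)
qed simp

lemma integral_gaussian_mixture_eq_besselK:
  fixes nu rho r :: real
  assumes "nu > 0" and "rho > 0" and "r > 0"
  shows "integral {0<..} (\<lambda>t. t powr (nu - 1) * exp (- t / rho\<^sup>2) * exp (- r\<^sup>2 / (4 * t)))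
    = 2 * (r * rho / 2) powr nu * besselK nu (r / rho)"
proof -
  define F where "F t = t powr (nu - 1) * exp (- t / rho\<^sup>2) * exp (- r\<^sup>2 / (4 * t))" for t
  define c where "c = r * rho / 2"
  define f where "f u = exp (nu * u) * exp (- (r / rho) * cosh u)" for u
  have "c > 0" using assms by (simp add: c_def)
  \<comment> \<open>The substitution t = c e^u turns t/rho^2 + r^2/(4t) into (r/rho) cosh u.\<close>
  have subst: "\<bar>1 / t\<bar> * f (ln (t / c)) = c powr (- nu) * F t" if "t > 0" for t
  proof -
    have "exp (nu * ln (t / c)) = (t / c) powr nu"
      using that \<open>c > 0\<close> by (simp add: powr_def)
    moreover have "r / rho * cosh (ln (t / c)) = t / rho\<^sup>2 + r\<^sup>2 / (4 * t)"
      using that \<open>c > 0\<close> assms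
      by (simp add: cosh_def exp_minus c_def field_simps power2_eq_square)
    ultimately have "\<bar>1 / t\<bar> * f (ln (t / c)) = (t / c) powr nu / t * exp (- (t / rho\<^sup>2 + r\<^sup>2 / (4 * t)))"
      using that unfolding f_def by (simp flip: mult_minus_left)
    also have "(t / c) powr nu / t = c powr (- nu) * t powr (nu - 1)"
      using that \<open>c > 0\<close> by (simp add: powr_divide powr_diff powr_minus divide_simps)
    finally show ?thesis by (simp add: F_def exp_add[symmetric] mult_ac)
  qed
  have "f absolutely_integrable_on (\<lambda>t. ln (t / c)) ` {0<..}
      \<and> integral ((\<lambda>t. ln (t / c)) ` {0<..}) f = c powr (- nu) * integral {0<..} F"
  proof (rule has_absolute_integral_change_of_variables_1'[where g' = "\<lambda>t. 1 / t", THEN iffD1])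
    have A: "(\<lambda>t. c powr (- nu) * F t) absolutely_integrable_on {0<..}"
      using gaussian_mixture_absolutely_integrable[OF assms(1,2), of r]
      by (simp add: F_def[abs_def] absolutely_integrable_on_def integrable_on_mult_right)
    show "(\<lambda>t. \<bar>1 / t\<bar> * f (ln (t / c))) absolutely_integrable_on {0<..}
        \<and> integral {0<..} (\<lambda>t. \<bar>1 / t\<bar> * f (ln (t / c))) = c powr (- nu) * integral {0<..} F"
    proof
      show "(\<lambda>t. \<bar>1 / t\<bar> * f (ln (t / c))) absolutely_integrable_on {0<..}"
        by (rule absolutely_integrable_spike[OF A negligible_empty]) (use subst in auto)
      have "integral {0<..} (\<lambda>t. \<bar>1 / t\<bar> * f (ln (t / c))) = integral {0<..} (\<lambda>t. c powr (- nu) * F t)"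
        by (rule integral_cong) (use subst in auto)
      then show "integral {0<..} (\<lambda>t. \<bar>1 / t\<bar> * f (ln (t / c))) = c powr (- nu) * integral {0<..} F"
        by (simp only: integral_mult_right)
    qed
    show "((\<lambda>t. ln (t / c)) has_field_derivative 1 / t) (at t within {0<..})" if "t \<in> {0<..}" for t
      using that \<open>c > 0\<close> by (auto intro!: derivative_eq_intros simp: field_simps)
    show "inj_on (\<lambda>t. ln (t / c)) {0<..}"
      using \<open>c > 0\<close> by (auto simp: inj_on_def)
  qed simp
  moreover have "(\<lambda>t. ln (t / c)) ` {0<..} = UNIV"
  proof -
    have "u = ln (c * exp u / c)" "c * exp u \<in> {0<..}" for u
      using \<open>c > 0\<close> by simp_all
    then show ?thesis by blast
  qed
  ultimately have "c powr (- nu) * integral {0<..} F = 2 * besselK nu (r / rho)"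
    using integral_exp_cosh_eq_besselK[of nu "r / rho"] unfolding f_def[abs_def] by simp
  then have "integral {0<..} F = c powr nu * (2 * besselK nu (r / rho))"
    using \<open>c > 0\<close> by (simp add: powr_minus field_simps)
  then show ?thesis by (simp add: F_def[abs_def] c_def mult_ac)
qed

lemma matern_gaussian_mixture:
  fixes h :: "'a::real_normed_vector" and nu rho :: real
  assumes "nu > 0" and "rho > 0"
  shows "((\<lambda>t. t powr (nu - 1) * exp (- t / rho\<^sup>2) * exp (- (norm h)\<^sup>2 / (4 * t)))
    has_integral rho powr (2 * nu) * Gamma nu * matern h rho nu) {0<..}"
proof (cases "h = 0")
  case True
  have "(1 / rho\<^sup>2) powr nu = 1 / rho powr (2 * nu)"
    using assms by (simp add: powr_divide powr_powr flip: powr_numeral)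
  then show ?thesis
    using True Gamma_integral_rate[of nu "1 / rho\<^sup>2"] assms by (simp add: matern_def mult.commute)
next
  case False
  define r where "r = norm h"
  have "r > 0" using False by (simp add: r_def)
  have "Gamma nu \<noteq> 0"
    using Gamma_real_pos[OF assms(1)] by linarith
  have "integral {0<..} (\<lambda>t. t powr (nu - 1) * exp (- t / rho\<^sup>2) * exp (- r\<^sup>2 / (4 * t)))
      = 2 * (r * rho / 2) powr nu * besselK nu (r / rho)"
    by (rule integral_gaussian_mixture_eq_besselK[OF assms \<open>r > 0\<close>])
  also have "2 * (r * rho / 2) powr nu
      = rho powr (2 * nu) * Gamma nu * ((r / rho) powr nu / (Gamma nu * 2 powr (nu - 1)))"
    using assms \<open>r > 0\<close> \<open>Gamma nu \<noteq> 0\<close>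
    by (simp add: powr_divide powr_mult powr_diff field_simps flip: powr_add)
  also have "\<dots> * besselK nu (r / rho) = rho powr (2 * nu) * Gamma nu * matern h rho nu"
    using False by (simp add: matern_def r_def)
  finally show ?thesis
    using gaussian_mixture_absolutely_integrable[OF assms, of r]
    by (simp add: r_def absolutely_integrable_on_def has_integral_iff)
qed

lemma matern_form_gaussian_mixture:
  fixes s :: "'n::finite \<Rightarrow> 'a::real_normed_vector" and a :: "real^'n" and nu rho :: real
  assumes "nu > 0" and "rho > 0"
  shows "((\<lambda>t. t powr (nu - 1) * exp (- t / rho\<^sup>2) *
      (\<Sum>i\<in>UNIV. \<Sum>j\<in>UNIV. a$i * a$j * exp (- (norm (s i - s j))\<^sup>2 / (4 * t))))
    has_integral rho powr (2 * nu) * Gamma nu * (a \<bullet> (matern_corr_matrix s rho nu *v a))) {0<..}"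
proof -
  have "((\<lambda>t. \<Sum>i\<in>UNIV. \<Sum>j\<in>UNIV. a$i * a$j *
      (t powr (nu - 1) * exp (- t / rho\<^sup>2) * exp (- (norm (s i - s j))\<^sup>2 / (4 * t))))
    has_integral (\<Sum>i\<in>UNIV. \<Sum>j\<in>UNIV. a$i * a$j *
      (rho powr (2 * nu) * Gamma nu * matern (s i - s j) rho nu))) {0<..}"
    by (intro has_integral_sum has_integral_mult_right matern_gaussian_mixture assms) auto
  moreover have "a \<bullet> (matern_corr_matrix s rho nu *v a)
      = (\<Sum>i\<in>UNIV. \<Sum>j\<in>UNIV. a$i * a$j * matern (s i - s j) rho nu)"
    by (simp add: inner_vec_def matrix_vector_mult_def matern_corr_matrix_def sum_distrib_left mult_ac)
  ultimately show ?thesis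
    by (simp add: sum_distrib_left mult_ac)
qed

section \<open>Positivity and monotonicity of the Matern correlation matrix\<close>

lemma matern_minus: "matern (- h) rho nu = matern h rho nu"
  by (simp add: matern_def)

lemma matern_corr_matrix_transpose:
  "transpose (matern_corr_matrix s rho nu) = matern_corr_matrix s rho nu"
proof -
  have "matern (s j - s i) rho nu = matern (s i - s j) rho nu" for i j
    using matern_minus[of "s i - s j"] by simp
  then show ?thesis by (simp add: transpose_def matern_corr_matrix_def)
qed

lemma has_integral_greaterThan_pos:
  fixes f :: "real \<Rightarrow> real"
  assumes "(f has_integral I) {0<..}" and "continuous_on {0<..} f" and "\<And>t. t > 0 \<Longrightarrow> 0 < f t"
  shows "0 < I"
proof -
  have cont: "continuous_on {1..2} f"
    using assms(2) by (rule continuous_on_subset) auto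
  obtain t0 where "t0 \<in> {1..2}" and min: "\<And>t. t \<in> {1..2} \<Longrightarrow> f t0 \<le> f t"
    using continuous_attains_inf[OF compact_Icc _ cont] by auto
  have "0 < f t0" using \<open>t0 \<in> {1..2}\<close> assms(3) by simp
  also have "f t0 = integral {1..2::real} (\<lambda>_. f t0)" by simp
  also have "\<dots> \<le> integral {1..2} f"
    by (rule integral_le) (auto intro: integrable_continuous_real cont min)
  also have "\<dots> \<le> integral {0<..} f"
    by (rule integral_subset_le)
      (use has_integral_integrable[OF assms(1)] cont assms(3)
        in \<open>auto intro: integrable_continuous_real less_imp_le\<close>)
  also have "\<dots> = I" using assms(1) by (rule integral_unique)
  finally show ?thesis .
qed

lemma matern_form_pos:
  fixes s :: "'n::finite \<Rightarrow> real^'d" and a :: "real^'n" and nu rho :: real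
  assumes "inj s" and "nu > 0" and "rho > 0" and "a \<noteq> 0"
  shows "0 < a \<bullet> (matern_corr_matrix s rho nu *v a)"
proof -
  have "0 < rho powr (2 * nu) * Gamma nu * (a \<bullet> (matern_corr_matrix s rho nu *v a))"
  proof (rule has_integral_greaterThan_pos[OF matern_form_gaussian_mixture[OF assms(2,3)]])
    show "continuous_on {0<..} (\<lambda>t. t powr (nu - 1) * exp (- t / rho\<^sup>2) *
        (\<Sum>i\<in>UNIV. \<Sum>j\<in>UNIV. a$i * a$j * exp (- (norm (s i - s j))\<^sup>2 / (4 * t))))"
      using assms(3) by (intro continuous_intros) auto
    show "0 < t powr (nu - 1) * exp (- t / rho\<^sup>2) *
        (\<Sum>i\<in>UNIV. \<Sum>j\<in>UNIV. a$i * a$j * exp (- (norm (s i - s j))\<^sup>2 / (4 * t)))" if "t > 0" for t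
      using that gaussian_kernel_pos_def[of "4 * t", OF _ assms(1,4)] by simp
  qed
  moreover have "0 < rho powr (2 * nu) * Gamma nu"
    using assms by simp
  ultimately show ?thesis
    by (rule zero_less_mult_pos)
qed

lemma scaled_matern_form_mono:
  fixes s :: "'n::finite \<Rightarrow> real^'d" and a :: "real^'n" and nu rho1 rho2 :: real
  assumes "inj s" and "nu > 0" and "0 < rho1" and "rho1 \<le> rho2"
  shows "rho1 powr (2 * nu) * (a \<bullet> (matern_corr_matrix s rho1 nu *v a))
       \<le> rho2 powr (2 * nu) * (a \<bullet> (matern_corr_matrix s rho2 nu *v a))"
proof -
  have "rho1 powr (2 * nu) * Gamma nu * (a \<bullet> (matern_corr_matrix s rho1 nu *v a))
      \<le> rho2 powr (2 * nu) * Gamma nu * (a \<bullet> (matern_corr_matrix s rho2 nu *v a))"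
  proof (rule has_integral_le[OF matern_form_gaussian_mixture matern_form_gaussian_mixture])
    fix t :: real assume "t \<in> {0<..}"
    then have "t / rho2\<^sup>2 \<le> t / rho1\<^sup>2"
      using assms by (intro divide_left_mono power_mono mult_pos_pos) auto
    then have "exp (- t / rho1\<^sup>2) \<le> exp (- t / rho2\<^sup>2)"
      by simp
    then show "t powr (nu - 1) * exp (- t / rho1\<^sup>2) *
          (\<Sum>i\<in>UNIV. \<Sum>j\<in>UNIV. a$i * a$j * exp (- (norm (s i - s j))\<^sup>2 / (4 * t)))
        \<le> t powr (nu - 1) * exp (- t / rho2\<^sup>2) *
          (\<Sum>i\<in>UNIV. \<Sum>j\<in>UNIV. a$i * a$j * exp (- (norm (s i - s j))\<^sup>2 / (4 * t)))"
      using \<open>t \<in> {0<..}\<close> gaussian_kernel_nonneg[of "4 * t" s a] assms(1)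
      by (intro mult_right_mono mult_left_mono) auto
  qed (use assms in auto)
  then show ?thesis
    using Gamma_real_pos[OF assms(2)] by (simp add: mult.commute[of _ "Gamma nu"] mult.assoc)
qed

theorem lemma1:
  fixes s :: "'n::finite \<Rightarrow> real^'d" and nu rho1 rho2 :: real and Z :: "real^'n"
  assumes "inj s" and "nu > 0" and "0 < rho1" and "rho1 < rho2"
  shows "c_hat s nu Z rho2 \<le> c_hat s nu Z rho1"
proof -
  define M where "M rho = matern_corr_matrix s rho nu" for rho
  define c where "c rho = rho powr (2 * nu)" for rho
  have pos: "0 < x \<bullet> (M rho *v x)" if "rho > 0" "x \<noteq> 0" for rho x
    unfolding M_def using matern_form_pos[OF assms(1,2) that] .
  have inv: "(c rho *\<^sub>R M rho) *v (inverse (c rho) *\<^sub>R (matrix_inv (M rho) *v Z)) = Z"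
    if "rho > 0" for rho
    using matrix_inv_right_of_pos_def[OF pos[OF that]] that
    by (simp add: c_def matrix_vector_mult_scaleR flip: scaleR_matrix_vector_assoc)
  have "Z \<bullet> (inverse (c rho2) *\<^sub>R (matrix_inv (M rho2) *v Z))
      \<le> Z \<bullet> (inverse (c rho1) *\<^sub>R (matrix_inv (M rho1) *v Z))"
  proof (rule inner_solution_antimono[OF _ _ _ inv inv])
    show "transpose (c rho1 *\<^sub>R M rho1) = c rho1 *\<^sub>R M rho1"
      by (simp add: transpose_scalar M_def matern_corr_matrix_transpose)
    show "0 \<le> x \<bullet> ((c rho1 *\<^sub>R M rho1) *v x)" for x
      using pos[OF assms(3), of x]
      by (cases "x = 0") (simp_all add: c_def flip: scaleR_matrix_vector_assoc)
    show "x \<bullet> ((c rho1 *\<^sub>R M rho1) *v x) \<le> x \<bullet> ((c rho2 *\<^sub>R M rho2) *v x)" for x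
      using scaled_matern_form_mono[OF assms(1,2,3), of rho2 x] assms(4)
      by (simp add: c_def M_def flip: scaleR_matrix_vector_assoc)
  qed (use assms in auto)
  then show ?thesis
    using assms by (simp add: c_hat_def M_def c_def divide_right_mono field_simps)
qed

end
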